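(* Let $H$ and $\alpha$ be entire functions such that $H'$ and $\alpha'$ have no common zeros. For $a\in\mathbb{C}$ put $H_a(z):=H(z)+a\alpha(z)$. Then there exists an at most countable set $E\subset\mathbb{C}$ such that for every $a\in\mathbb{C}\setminus E$, every $c\in\mathbb{C}$ and all $z,w\in\{\zeta\in\mathbb{C}: H_a(\zeta)=c,\ H_a'(\zeta)=0\}$ we have $\alpha(z)=\alpha(w)$. *)

theory Defs
  imports "HOL-Complex_Analysis.Complex_Analysis"
begin

end

theory Submission
  imports Defs
begin

text \<open>
  A critical point \<open>z\<close> of \<open>H\<^sub>a = H + a \<alpha>\<close> has \<open>\<alpha>'(z) \<noteq> 0\<close> and \<open>a = \<phi>(z)\<close> with
  \<open>\<phi> = -H'/\<alpha>'\<close>, and its critical value is \<open>G(z) = H(z) + \<phi>(z) \<alpha>(z)\<close>. Since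
  \<open>H' + \<phi> \<alpha>' = 0\<close>, the envelope \<open>G\<close> satisfies \<open>G' = \<phi>' \<alpha>\<close>. The critical values of the
  holomorphic function \<open>\<phi>\<close> form a countable set. Away from the zeros of \<open>\<phi>'\<close>, the map
  \<open>(z, w) \<mapsto> (\<phi>(z) - \<phi>(w), G(z) - G(w))\<close> has Jacobian determinant
  \<open>\<phi>'(z) \<phi>'(w) (\<alpha>(z) - \<alpha>(w))\<close>, so the pairs with \<open>\<phi>(z) = \<phi>(w)\<close>, \<open>G(z) = G(w)\<close> and
  \<open>\<alpha>(z) \<noteq> \<alpha>(w)\<close> are isolated, hence countable. Both countable sets of \<open>\<phi>\<close>-values together
  form the exceptional set.
\<close>

lemma countable_image_locally_constant:
  fixes f :: "'a::{metric_space, second_countable_topology} \<Rightarrow> 'b"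
  assumes "\<And>x. x \<in> A \<Longrightarrow> \<exists>e>0. \<forall>y\<in>A. dist y x < e \<longrightarrow> f y = f x"
  shows "countable (f ` A)"
proof -
  obtain r where r: "\<And>x. x \<in> A \<Longrightarrow> r x > 0 \<and> (\<forall>y\<in>A. dist y x < r x \<longrightarrow> f y = f x)"
    using assms by metis
  define B where "B c = ball (inv_into A f c) (r (inv_into A f c) / 2)" for c
  have meet: "c = d" if "c \<in> f ` A" "d \<in> f ` A" "B c \<inter> B d \<noteq> {}" for c d
  proof -
    define x y where "x = inv_into A f c" and "y = inv_into A f d"
    have A: "x \<in> A" "y \<in> A" and fxy: "f x = c" "f y = d"
      using that by (auto simp: x_def y_def inv_into_into f_inv_into_f)
    have "dist x y < r x / 2 + r y / 2"
      using that(3) by (auto simp: B_def x_def y_def intro: dist_triangle_less_add)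
    then have "dist x y < r y \<or> dist y x < r x"
      by (auto simp: dist_commute)
    then have "f x = f y"
      using r A by metis
    then show ?thesis using fxy by simp
  qed
  have "countable (B ` f ` A)"
  proof (rule countable_disjoint_open_subsets)
    show "pairwise disjnt (B ` f ` A)"
    proof (rule pairwiseI)
      fix S T assume "S \<in> B ` f ` A" "T \<in> B ` f ` A" "S \<noteq> T"
      then obtain c d where "c \<in> f ` A" "d \<in> f ` A" "S = B c" "T = B d" "c \<noteq> d"
        by (metis imageE)
      then show "disjnt S T"
        unfolding disjnt_def by (metis meet)
    qed
  qed (auto simp only: B_def open_ball)
  moreover have "inj_on B (f ` A)"
  proof (rule inj_onI)
    fix c d assume cd: "c \<in> f ` A" "d \<in> f ` A" "B c = B d"
    have "B c \<noteq> {}"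
      using r[of "inv_into A f c"] cd(1) by (simp add: B_def inv_into_into)
    then show "c = d"
      using meet[OF cd(1,2)] cd(3) by simp
  qed
  ultimately show ?thesis
    by (rule countable_image_inj_on)
qed

lemma countable_discrete:
  fixes A :: "'a::{metric_space, second_countable_topology} set"
  assumes "discrete A"
  shows "countable A"
proof -
  have "countable ((\<lambda>x. x) ` A)"
  proof (rule countable_image_locally_constant)
    fix x assume "x \<in> A"
    then obtain e where "e > 0" "\<forall>y\<in>A. dist x y < e \<longrightarrow> y = x"
      using assms unfolding discrete_def isolated_in_dist_Ex_iff by blast
    then show "\<exists>e>0. \<forall>y\<in>A. dist y x < e \<longrightarrow> y = x"
      by (auto simp: dist_commute)
  qed
  then show ?thesis
    by simp
qed

lemma countable_critical_values:
  assumes holf: "f holomorphic_on S" and "open S"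
  shows "countable (f ` {z \<in> S. deriv f z = 0})"
proof (rule countable_image_locally_constant)
  let ?C = "{z \<in> S. deriv f z = 0}"
  fix x assume "x \<in> ?C"
  then obtain r where "r > 0" and r: "ball x r \<subseteq> S"
    using \<open>open S\<close> open_contains_ball_eq by blast
  show "\<exists>e>0. \<forall>y\<in>?C. dist y x < e \<longrightarrow> f y = f x"
  proof (cases "x islimpt ?C \<inter> ball x r")
    case True
    have "deriv f y = 0" if "y \<in> ball x r" for y
      by (rule analytic_continuation[of "deriv f" "ball x r" "?C \<inter> ball x r" x])
         (use True that \<open>r > 0\<close> in \<open>auto intro: holomorphic_deriv holomorphic_on_subset[OF holf r]\<close>)
    then have "\<exists>c. \<forall>y\<in>ball x r. f y = c"
      using holomorphic_derivI[OF holomorphic_on_subset[OF holf r]]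
      by (intro has_field_derivative_zero_constant) (auto simp del: mem_ball)
    then show ?thesis
      using \<open>r > 0\<close> by (metis centre_in_ball dist_commute mem_ball)
  next
    case False
    then obtain e where "e > 0" and e: "\<And>y. y \<in> ?C \<inter> ball x r \<Longrightarrow> y \<noteq> x \<Longrightarrow> e \<le> dist y x"
      unfolding islimpt_approachable by (meson not_le)
    show ?thesis
      by (rule exI[of _ "min e r"]) (use \<open>e > 0\<close> \<open>r > 0\<close> e in \<open>force simp: dist_commute\<close>)
  qed
qed

lemma has_derivative_inj_imp_isolated_in_fibre:
  fixes F :: "'a::euclidean_space \<Rightarrow> 'b::euclidean_space"
  assumes "(F has_derivative L) (at p)" and "inj L"
  shows "\<exists>e>0. \<forall>q. dist q p < e \<longrightarrow> F q = F p \<longrightarrow> q = p"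
proof -
  obtain B where "B > 0" and B: "\<And>x. B * norm x \<le> norm (L x)"
    using linear_inj_bounded_below_pos[OF has_derivative_linear[OF assms(1)] assms(2)] by blast
  obtain d where "d > 0"
    and d: "\<And>q. norm (q - p) < d \<Longrightarrow> norm (F q - F p - L (q - p)) \<le> B / 2 * norm (q - p)"
    using assms(1) \<open>B > 0\<close> unfolding has_derivative_at_alt by (meson half_gt_zero)
  have "q = p" if "dist q p < d" "F q = F p" for q
  proof -
    have "B * norm (q - p) \<le> B / 2 * norm (q - p)"
      using B[of "q - p"] d[of q] that by (simp add: dist_norm norm_minus_commute)
    then show "q = p"
      using \<open>B > 0\<close> by (simp add: mult_le_cancel_right)
  qed
  then show ?thesis
    using \<open>d > 0\<close> by blast
qed

lemma has_derivative_diff_fst_snd: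
  fixes f :: "'a::real_normed_field \<Rightarrow> 'a"
  assumes "(f has_field_derivative a) (at z)" and "(f has_field_derivative b) (at w)"
  shows "((\<lambda>q. f (fst q) - f (snd q)) has_derivative (\<lambda>h. a * fst h - b * snd h)) (at (z, w))"
proof -
  have "((\<lambda>q. f (fst q)) has_derivative (\<lambda>h. a * fst h)) (at (z, w))"
    using assms(1) unfolding has_field_derivative_def
    by (intro has_derivative_compose[OF has_derivative_fst[OF has_derivative_ident]]) simp
  moreover have "((\<lambda>q. f (snd q)) has_derivative (\<lambda>h. b * snd h)) (at (z, w))"
    using assms(2) unfolding has_field_derivative_def
    by (intro has_derivative_compose[OF has_derivative_snd[OF has_derivative_ident]]) simp
  ultimately show ?thesis
    by (rule has_derivative_diff)
qed

lemma inj_linear_pair_map: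
  fixes a b c d :: "'a::field"
  assumes "a * d \<noteq> b * c"
  shows "inj (\<lambda>h. (a * fst h - b * snd h, c * fst h - d * snd h))"
proof (rule injI)
  fix x y :: "'a \<times> 'a"
  define u v where "u = fst x - fst y" and "v = snd x - snd y"
  assume eq: "(a * fst x - b * snd x, c * fst x - d * snd x) = (a * fst y - b * snd y, c * fst y - d * snd y)"
  have "a * u - b * v = (a * fst x - b * snd x) - (a * fst y - b * snd y)"
    and "c * u - d * v = (c * fst x - d * snd x) - (c * fst y - d * snd y)"
    by (simp_all add: u_def v_def algebra_simps)
  then have u: "a * u = b * v" and v: "c * u = d * v"
    using eq by simp_all
  have "(a * d - b * c) * u = d * (a * u) - b * (c * u)"
    by (simp add: algebra_simps)
  also have "\<dots> = 0"
    using u v by simp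
  finally have u0: "(a * d - b * c) * u = 0" .
  have "(a * d - b * c) * v = a * (d * v) - c * (b * v)"
    by (simp add: algebra_simps)
  also have "\<dots> = 0"
    using u v by (metis mult.left_commute diff_self)
  finally have "(a * d - b * c) * v = 0" .
  with u0 assms have "u = 0" "v = 0"
    by simp_all
  then show "x = y"
    by (simp add: u_def v_def prod_eq_iff)
qed

lemma countable_equal_value_pairs:
  fixes \<phi> \<phi>' G \<alpha> :: "complex \<Rightarrow> complex"
  assumes d\<phi>: "\<And>z. z \<in> S \<Longrightarrow> (\<phi> has_field_derivative \<phi>' z) (at z)"
    and dG: "\<And>z. z \<in> S \<Longrightarrow> (G has_field_derivative \<phi>' z * \<alpha> z) (at z)"
  shows "countable {(z, w). z \<in> S \<and> w \<in> S \<and> \<phi>' z \<noteq> 0 \<and> \<phi>' w \<noteq> 0 \<and>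
                           \<phi> z = \<phi> w \<and> G z = G w \<and> \<alpha> z \<noteq> \<alpha> w}"
    (is "countable ?P")
proof -
  define F where "F q = (\<phi> (fst q) - \<phi> (snd q), G (fst q) - G (snd q))" for q
  have "p isolated_in ?P" if "p \<in> ?P" for p
  proof -
    obtain z w where p: "p = (z, w)" and zw: "z \<in> S" "w \<in> S" "\<phi>' z \<noteq> 0" "\<phi>' w \<noteq> 0" "\<alpha> z \<noteq> \<alpha> w"
      using \<open>p \<in> ?P\<close> by blast
    have "(F has_derivative (\<lambda>h. (\<phi>' z * fst h - \<phi>' w * snd h,
                                  \<phi>' z * \<alpha> z * fst h - \<phi>' w * \<alpha> w * snd h))) (at p)"
      unfolding F_def[abs_def] p
      by (intro has_derivative_Pair has_derivative_diff_fst_snd d\<phi> dG zw)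
    moreover have "inj (\<lambda>h. (\<phi>' z * fst h - \<phi>' w * snd h,
                             \<phi>' z * \<alpha> z * fst h - \<phi>' w * \<alpha> w * snd h))"
      by (rule inj_linear_pair_map) (use zw in \<open>auto simp: mult.assoc\<close>)
    ultimately obtain e where "e > 0" and e: "\<And>q. dist q p < e \<Longrightarrow> F q = F p \<Longrightarrow> q = p"
      using has_derivative_inj_imp_isolated_in_fibre by blast
    have "F q = F p" if "q \<in> ?P" for q
      using that \<open>p \<in> ?P\<close> by (auto simp: F_def)
    then have "\<forall>q\<in>?P. dist p q < e \<longrightarrow> q = p"
      using e by (simp add: dist_commute)
    then show ?thesis
      unfolding isolated_in_dist_Ex_iff using \<open>p \<in> ?P\<close> \<open>e > 0\<close> by blast
  qed
  then show ?thesis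
    by (intro countable_discrete discreteI)
qed

lemma envelope_has_field_derivative:
  assumes "(H has_field_derivative H') (at z)" and "(\<alpha> has_field_derivative \<alpha>') (at z)"
    and "(\<phi> has_field_derivative \<phi>') (at z)" and "H' + \<phi> z * \<alpha>' = 0"
  shows "((\<lambda>z. H z + \<phi> z * \<alpha> z) has_field_derivative \<phi>' * \<alpha> z) (at z)"
proof -
  have "((\<lambda>z. H z + \<phi> z * \<alpha> z) has_field_derivative H' + (\<phi>' * \<alpha> z + \<alpha>' * \<phi> z)) (at z)"
    using assms(1-3) by (intro DERIV_add DERIV_mult)
  moreover have "H' + (\<phi>' * \<alpha> z + \<alpha>' * \<phi> z) = \<phi>' * \<alpha> z + (H' + \<phi> z * \<alpha>')"
    by (simp add: algebra_simps)
  ultimately show ?thesis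
    using assms(4) by simp
qed

lemma countable_exceptional_levels:
  fixes \<phi> G \<alpha> :: "complex \<Rightarrow> complex"
  assumes hol\<phi>: "\<phi> holomorphic_on S" and "open S"
    and dG: "\<And>z. z \<in> S \<Longrightarrow> (G has_field_derivative deriv \<phi> z * \<alpha> z) (at z)"
  obtains E where "countable E"
    and "\<And>z w. z \<in> S \<Longrightarrow> w \<in> S \<Longrightarrow> \<phi> z \<notin> E \<Longrightarrow> \<phi> z = \<phi> w \<Longrightarrow> G z = G w \<Longrightarrow> \<alpha> z = \<alpha> w"
proof
  have d\<phi>: "(\<phi> has_field_derivative deriv \<phi> z) (at z)" if "z \<in> S" for z
    by (rule holomorphic_derivI[OF hol\<phi> \<open>open S\<close> that])
  define P where "P = {(z, w). z \<in> S \<and> w \<in> S \<and> deriv \<phi> z \<noteq> 0 \<and> deriv \<phi> w \<noteq> 0 \<and>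
                              \<phi> z = \<phi> w \<and> G z = G w \<and> \<alpha> z \<noteq> \<alpha> w}"
  define E where "E = \<phi> ` {z \<in> S. deriv \<phi> z = 0} \<union> (\<phi> \<circ> fst) ` P"
  show "countable E"
    using countable_critical_values[OF hol\<phi> \<open>open S\<close>] countable_equal_value_pairs[OF d\<phi> dG]
    by (simp add: E_def P_def image_comp[symmetric])
  show "\<alpha> z = \<alpha> w" if "z \<in> S" "w \<in> S" "\<phi> z \<notin> E" "\<phi> z = \<phi> w" "G z = G w" for z w
  proof (rule ccontr)
    assume "\<alpha> z \<noteq> \<alpha> w"
    moreover have "deriv \<phi> z \<noteq> 0" "deriv \<phi> w \<noteq> 0"
      using that unfolding E_def by (metis (mono_tags, lifting) UnI1 image_eqI mem_Collect_eq)+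
    ultimately have "(z, w) \<in> P"
      using that by (simp add: P_def)
    then show False
      using \<open>\<phi> z \<notin> E\<close> unfolding E_def by force
  qed
qed

lemma pencil_critical_point_iff:
  assumes "H holomorphic_on UNIV" and "\<alpha> holomorphic_on UNIV"
    and "\<not> (deriv H z = 0 \<and> deriv \<alpha> z = 0)"
  shows "deriv (\<lambda>\<xi>. H \<xi> + a * \<alpha> \<xi>) z = 0 \<longleftrightarrow> deriv \<alpha> z \<noteq> 0 \<and> a = - deriv H z / deriv \<alpha> z"
proof -
  have "deriv (\<lambda>\<xi>. H \<xi> + a * \<alpha> \<xi>) z = deriv H z + a * deriv \<alpha> z"
    using assms(1,2) by (intro DERIV_imp_deriv DERIV_add DERIV_cmult holomorphic_derivI[of _ UNIV]) auto
  then show ?thesis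
    using assms(3) by (cases "deriv \<alpha> z = 0") (auto simp: field_simps add_eq_0_iff)
qed

theorem lemma2p1:
  fixes H \<alpha> :: "complex \<Rightarrow> complex"
  assumes "H holomorphic_on UNIV"
    and "\<alpha> holomorphic_on UNIV"
    and "\<And>z. \<not> (deriv H z = 0 \<and> deriv \<alpha> z = 0)"
  shows "\<exists>E :: complex set. countable E \<and>
           (\<forall>a. a \<notin> E \<longrightarrow> (\<forall>c z w.
              z \<in> {\<zeta>. H \<zeta> + a * \<alpha> \<zeta> = c \<and> deriv (\<lambda>\<xi>. H \<xi> + a * \<alpha> \<xi>) \<zeta> = 0} \<longrightarrow>
              w \<in> {\<zeta>. H \<zeta> + a * \<alpha> \<zeta> = c \<and> deriv (\<lambda>\<xi>. H \<xi> + a * \<alpha> \<xi>) \<zeta> = 0} \<longrightarrow>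
              \<alpha> z = \<alpha> w))"
proof -
  define S where "S = {z. deriv \<alpha> z \<noteq> 0}"
  define \<phi> where "\<phi> z = - deriv H z / deriv \<alpha> z" for z
  have "open S"
    unfolding S_def using assms(2)
    by (intro open_Collect_neq holomorphic_on_imp_continuous_on holomorphic_deriv) auto
  have hol\<phi>: "\<phi> holomorphic_on S"
    unfolding \<phi>_def[abs_def]
    using \<open>open S\<close> holomorphic_on_subset[OF assms(1)] holomorphic_on_subset[OF assms(2)]
    by (intro holomorphic_intros) (auto simp: S_def)
  have dH: "(H has_field_derivative deriv H z) (at z)" and d\<alpha>: "(\<alpha> has_field_derivative deriv \<alpha> z) (at z)" for z
    using holomorphic_derivI[OF assms(1) open_UNIV] holomorphic_derivI[OF assms(2) open_UNIV] by blast+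
  have "((\<lambda>z. H z + \<phi> z * \<alpha> z) has_field_derivative deriv \<phi> z * \<alpha> z) (at z)" if "z \<in> S" for z
    using that
    by (intro envelope_has_field_derivative[OF dH d\<alpha> holomorphic_derivI[OF hol\<phi> \<open>open S\<close> that]])
       (simp add: \<phi>_def S_def)
  then obtain E where "countable E"
    and E: "\<And>z w. z \<in> S \<Longrightarrow> w \<in> S \<Longrightarrow> \<phi> z \<notin> E \<Longrightarrow> \<phi> z = \<phi> w \<Longrightarrow>
                 H z + \<phi> z * \<alpha> z = H w + \<phi> w * \<alpha> w \<Longrightarrow> \<alpha> z = \<alpha> w"
    using countable_exceptional_levels[OF hol\<phi> \<open>open S\<close>] by blast
  have critical: "x \<in> S \<and> \<phi> x = a" if "deriv (\<lambda>\<xi>. H \<xi> + a * \<alpha> \<xi>) x = 0" for a x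
    using pencil_critical_point_iff[OF assms(1,2,3), of a x] that by (simp add: S_def \<phi>_def)
  show ?thesis
  proof (intro exI[of _ E] conjI allI impI)
    fix a c z w
    assume "a \<notin> E"
      and "z \<in> {\<zeta>. H \<zeta> + a * \<alpha> \<zeta> = c \<and> deriv (\<lambda>\<xi>. H \<xi> + a * \<alpha> \<xi>) \<zeta> = 0}"
      and "w \<in> {\<zeta>. H \<zeta> + a * \<alpha> \<zeta> = c \<and> deriv (\<lambda>\<xi>. H \<xi> + a * \<alpha> \<xi>) \<zeta> = 0}"
    with critical[of a z] critical[of a w] show "\<alpha> z = \<alpha> w"
      by (intro E) auto
  qed (rule \<open>countable E\<close>)
qed

end
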